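(* Let $X$ be a set; give $2^X$ the product topology and $X$ the discrete topology. Then: (i) $\tau_{pp}$ is the smallest topology on $I(X)$ for which $\mathrm{dom}:I(X)\to 2^X$, $\mathrm{im}:I(X)\to 2^X$ and, for every $x\in X$, $\mathrm{ev}_x:D_x\to X$ (with $D_x$ carrying the subspace topology) are continuous; (ii) $\mathrm{dom}$ and $\mathrm{im}$ are open maps from $(I(X),\tau_{pp})$ to $2^X$; (iii) for any topological space $Y$ and any map $\varphi:Y\to(I(X),\tau_{pp})$, $\varphi$ is continuous if and only if $\mathrm{dom}\circ\varphi$ and $\mathrm{im}\circ\varphi$ are continuous and, for every $x\in X$, $\mathrm{ev}_x\circ\varphi$ is continuous on $\varphi^{-1}(D_x)$; (iv) the set of idempotents $\{1_A: A\subseteq X\}$ is $\tau_{pp}$-compact.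
   Context: $I(X)$ is the set of all bijections $f:A\to B$ with $A,B\subseteq X$ (including the empty map), $\mathrm{dom}(f)=A$, $\mathrm{im}(f)=B$. The maps $\mathrm{dom},\mathrm{im}:I(X)\to 2^X$ send $f$ to $\mathrm{dom}(f)$ and $\mathrm{im}(f)$. $D_x=\{f\in I(X): x\in\mathrm{dom}(f)\}$ and $\mathrm{ev}_x:D_x\to X$, $f\mapsto f(x)$. $1_A$ is the identity on $A$. For $x,y\in X$: $v(x,y)=\{f: x\in\mathrm{dom}(f), f(x)=y\}$, $w_1(x)=\{f: x\notin\mathrm{dom}(f)\}$, $w_2(y)=\{f: y\notin\mathrm{im}(f)\}$; $\tau_{pp}$ is the topology generated by the subbasis of all these sets. *)

theory Defs
  imports "HOL-Analysis.Analysis"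
begin

text \<open>Partial bijections of X are modelled as partial maps ('a \<rightharpoonup> 'a) that are injective
on their domain, with domain and image contained in X. dom and im are Map.dom and Map.ran.\<close>

definition pbij :: "'a set \<Rightarrow> ('a \<rightharpoonup> 'a) set" where
  "pbij X = {f. dom f \<subseteq> X \<and> ran f \<subseteq> X \<and> inj_on f (dom f)}"

text \<open>The power set 2^X with the product topology of discrete {0,1}, transported along the
bijection A \<mapsto> characteristic function of A (restricted to X).\<close>

definition powset_topology :: "'a set \<Rightarrow> 'a set topology" where
  "powset_topology X =
     pullback_topology (Pow X) (\<lambda>A. restrict (\<lambda>x. x \<in> A) X)
       (product_topology (\<lambda>_. discrete_topology (UNIV :: bool set)) X)"

definition Dset :: "'a set \<Rightarrow> 'a \<Rightarrow> ('a \<rightharpoonup> 'a) set" where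
  "Dset X x = {f \<in> pbij X. x \<in> dom f}"

definition ev :: "'a \<Rightarrow> ('a \<rightharpoonup> 'a) \<Rightarrow> 'a" where
  "ev x f = the (f x)"

definition vset :: "'a set \<Rightarrow> 'a \<Rightarrow> 'a \<Rightarrow> ('a \<rightharpoonup> 'a) set" where
  "vset X x y = {f \<in> pbij X. x \<in> dom f \<and> f x = Some y}"

definition w1set :: "'a set \<Rightarrow> 'a \<Rightarrow> ('a \<rightharpoonup> 'a) set" where
  "w1set X x = {f \<in> pbij X. x \<notin> dom f}"

definition w2set :: "'a set \<Rightarrow> 'a \<Rightarrow> ('a \<rightharpoonup> 'a) set" where
  "w2set X y = {f \<in> pbij X. y \<notin> ran f}"

text \<open>tau_pp: topology on pbij X generated by the subbasis (the whole space is included so that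
the empty intersection, i.e. pbij X itself, is open also when X is empty).\<close>

definition tau_pp :: "'a set \<Rightarrow> ('a \<rightharpoonup> 'a) topology" where
  "tau_pp X = topology_generated_by
     (insert (pbij X)
       ({vset X x y | x y. x \<in> X \<and> y \<in> X} \<union> {w1set X x | x. x \<in> X} \<union> {w2set X y | y. y \<in> X}))"

definition idmap :: "'a set \<Rightarrow> ('a \<rightharpoonup> 'a)" where
  "idmap A = (\<lambda>x. if x \<in> A then Some x else None)"

end

theory Submission
  imports Defs
begin

(* tau_pp is generated by the fibres v(x,y) of the maps ev_x and by the preimages w1(x), w2(y)
   of the cylinders {A. x \<notin> A} of 2^X under dom and im, while the preimage D_x of {A. x \<in> A}
   under dom is the union of the v(x,y). So a map into tau_pp is continuous as soon as these
   preimages are open, which gives (i) and (iii); (iv) follows because A \<mapsto> 1_A is continuous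
   on the compact Cantor cube 2^X.
   For (ii), a basic open set of tau_pp fixes finitely many values and excludes finitely many
   points from the domain and the image. If X is infinite, every A \<subseteq> X that agrees with dom f
   on the finitely many constrained points is the domain of a member of that basic set: keep f
   on the prescribed points and send the rest of A injectively into X minus the finitely many
   forbidden values. If X is finite, 2^X is discrete. Inversion f \<mapsto> f^-1 is a homeomorphism
   of tau_pp interchanging dom and im, so im is open because dom is. *)

section \<open>Continuity into discrete and generated topologies\<close>

lemma continuous_map_discrete_topology_iff:
  "continuous_map T (discrete_topology D) f \<longleftrightarrow>
     f ` topspace T \<subseteq> D \<and> (\<forall>y\<in>D. openin T {t \<in> topspace T. f t = y})"
proof
  assume f: "continuous_map T (discrete_topology D) f"
  show "f ` topspace T \<subseteq> D \<and> (\<forall>y\<in>D. openin T {t \<in> topspace T. f t = y})"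
  proof (intro conjI ballI)
    show "f ` topspace T \<subseteq> D"
      using continuous_map_image_subset_topspace[OF f] by simp
    fix y assume "y \<in> D"
    then have "openin T {t \<in> topspace T. f t \<in> {y}}"
      by (intro openin_continuous_map_preimage[OF f]) simp
    then show "openin T {t \<in> topspace T. f t = y}"
      by simp
  qed
next
  assume fibres: "f ` topspace T \<subseteq> D \<and> (\<forall>y\<in>D. openin T {t \<in> topspace T. f t = y})"
  show "continuous_map T (discrete_topology D) f"
    unfolding continuous_map
  proof (intro conjI allI impI)
    show "f ` topspace T \<subseteq> topspace (discrete_topology D)"
      using fibres by simp
    fix U assume "openin (discrete_topology D) U"
    then have "U \<subseteq> D"
      by simp
    have "{t \<in> topspace T. f t \<in> U} = (\<Union>y\<in>U. {t \<in> topspace T. f t = y})"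
      by auto
    also have "openin T \<dots>"
      using fibres \<open>U \<subseteq> D\<close> by (intro openin_Union) auto
    finally show "openin T {t \<in> topspace T. f t \<in> U}" .
  qed
qed

lemma continuous_map_into_topology_generated_by:
  assumes "\<phi> ` topspace Y \<subseteq> \<Union>\<S>"
    and "\<And>S. S \<in> \<S> \<Longrightarrow> openin Y {y \<in> topspace Y. \<phi> y \<in> S}"
  shows "continuous_map Y (topology_generated_by \<S>) \<phi>"
  unfolding continuous_map
proof (intro conjI allI impI)
  show "\<phi> ` topspace Y \<subseteq> topspace (topology_generated_by \<S>)"
    using assms(1) by simp
  fix U assume "openin (topology_generated_by \<S>) U"
  then have "generate_topology_on \<S> U"
    by (rule openin_topology_generated_by)
  then show "openin Y {y \<in> topspace Y. \<phi> y \<in> U}"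
  proof induction
    case Empty
    show ?case by simp
  next
    case (Int a b)
    have "{y \<in> topspace Y. \<phi> y \<in> a \<inter> b} =
          {y \<in> topspace Y. \<phi> y \<in> a} \<inter> {y \<in> topspace Y. \<phi> y \<in> b}"
      by auto
    with Int show ?case by auto
  next
    case (UN K)
    have "{y \<in> topspace Y. \<phi> y \<in> \<Union>K} = (\<Union>k\<in>K. {y \<in> topspace Y. \<phi> y \<in> k})"
      by auto
    with UN show ?case by (auto intro: openin_Union)
  next
    case (Basis S)
    then show ?case by (rule assms(2))
  qed
qed

section \<open>The Cantor cube 2^X\<close>

lemma topspace_powset_topology [simp]: "topspace (powset_topology X) = Pow X"
  unfolding powset_topology_def topspace_pullback_topology by auto

lemma openin_powset_topology_cylinder:
  assumes "finite K" "K \<subseteq> X"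
  shows "openin (powset_topology X) {A \<in> Pow X. A \<inter> K = C \<inter> K}"
proof -
  define S where "S i = (if i \<in> K then {i \<in> C} else UNIV)" for i
  have "openin (product_topology (\<lambda>_. discrete_topology (UNIV :: bool set)) X) (PiE X S)"
    unfolding openin_PiE_gen
  proof (rule disjI2, intro conjI)
    have "{i \<in> X. S i \<noteq> topspace (discrete_topology UNIV)} \<subseteq> K"
      by (auto simp: S_def)
    then show "finite {i \<in> X. S i \<noteq> topspace (discrete_topology UNIV)}"
      using assms(1) finite_subset by blast
  qed auto
  moreover have "restrict (\<lambda>x. x \<in> A) X \<in> PiE X S \<longleftrightarrow> (\<forall>i\<in>K. i \<in> A \<longleftrightarrow> i \<in> C)" for A
    using assms(2) by (auto simp: S_def PiE_iff)
  then have "{A \<in> Pow X. A \<inter> K = C \<inter> K} = (\<lambda>A. restrict (\<lambda>x. x \<in> A) X) -` PiE X S \<inter> Pow X"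
    by blast
  ultimately show ?thesis
    unfolding powset_topology_def openin_pullback_topology by blast
qed

lemma continuous_map_powset_topology_iff:
  "continuous_map T (powset_topology X) h \<longleftrightarrow>
     h ` topspace T \<subseteq> Pow X \<and>
     (\<forall>x\<in>X. openin T {t \<in> topspace T. x \<in> h t}) \<and>
     (\<forall>x\<in>X. openin T {t \<in> topspace T. x \<notin> h t})"
proof
  assume h: "continuous_map T (powset_topology X) h"
  then have into: "h ` topspace T \<subseteq> Pow X"
    by (auto simp: continuous_map)
  have cylinder: "openin T {t \<in> topspace T. h t \<in> {A \<in> Pow X. A \<inter> {x} = C \<inter> {x}}}"
    if "x \<in> X" for x C
    using that by (intro openin_continuous_map_preimage[OF h] openin_powset_topology_cylinder) auto
  have "openin T {t \<in> topspace T. x \<in> h t}" if "x \<in> X" for x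
  proof -
    have "{t \<in> topspace T. h t \<in> {A \<in> Pow X. A \<inter> {x} = {x} \<inter> {x}}} = {t \<in> topspace T. x \<in> h t}"
      using into by auto
    then show ?thesis
      using cylinder[OF that, of "{x}"] by (simp only:)
  qed
  moreover have "openin T {t \<in> topspace T. x \<notin> h t}" if "x \<in> X" for x
  proof -
    have "{t \<in> topspace T. h t \<in> {A \<in> Pow X. A \<inter> {x} = {} \<inter> {x}}} = {t \<in> topspace T. x \<notin> h t}"
      using into by auto
    then show ?thesis
      using cylinder[OF that, of "{}"] by (simp only:)
  qed
  ultimately show "h ` topspace T \<subseteq> Pow X \<and>
     (\<forall>x\<in>X. openin T {t \<in> topspace T. x \<in> h t}) \<and>
     (\<forall>x\<in>X. openin T {t \<in> topspace T. x \<notin> h t})"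
    using into by blast
next
  assume h: "h ` topspace T \<subseteq> Pow X \<and>
     (\<forall>x\<in>X. openin T {t \<in> topspace T. x \<in> h t}) \<and>
     (\<forall>x\<in>X. openin T {t \<in> topspace T. x \<notin> h t})"
  have "continuous_map T (product_topology (\<lambda>_. discrete_topology (UNIV :: bool set)) X)
          ((\<lambda>A. restrict (\<lambda>x. x \<in> A) X) \<circ> h)"
    unfolding continuous_map_componentwise
  proof (intro conjI ballI)
    fix k assume k: "k \<in> X"
    show "continuous_map T (discrete_topology UNIV) (\<lambda>t. ((\<lambda>A. restrict (\<lambda>x. x \<in> A) X) \<circ> h) t k)"
      unfolding continuous_map_discrete_topology_iff
    proof (intro conjI ballI)
      fix b :: bool
      show "openin T {t \<in> topspace T. ((\<lambda>A. restrict (\<lambda>x. x \<in> A) X) \<circ> h) t k = b}"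
        using h k by (cases b) simp_all
    qed auto
  qed auto
  then show "continuous_map T (powset_topology X) h"
    unfolding powset_topology_def using h by (intro continuous_map_pullback') auto
qed

lemma compact_space_powset_topology: "compact_space (powset_topology X)"
proof -
  let ?P = "product_topology (\<lambda>_. discrete_topology (UNIV :: bool set)) X"
  define g where "g p = {x \<in> X. p x}" for p :: "'a \<Rightarrow> bool"
  have restrict_g: "restrict (\<lambda>x. x \<in> g p) X = p" if "p \<in> topspace ?P" for p
  proof
    fix x
    show "restrict (\<lambda>x. x \<in> g p) X x = p x"
      using that by (cases "x \<in> X") (auto simp: g_def PiE_iff extensional_def)
  qed
  have "continuous_map ?P (powset_topology X) g"
    unfolding powset_topology_def
  proof (rule continuous_map_pullback')
    show "continuous_map ?P ?P ((\<lambda>A. restrict (\<lambda>x. x \<in> A) X) \<circ> g)"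
      by (rule continuous_map_eq[OF continuous_map_id]) (metis comp_apply restrict_g id_apply)
    show "topspace ?P \<subseteq> g -` Pow X"
      by (simp add: g_def subset_iff)
  qed
  moreover have "compactin ?P (topspace ?P)"
    using compact_space_product_topology[of "\<lambda>_. discrete_topology (UNIV :: bool set)" X]
    unfolding compact_space_def[symmetric] by (simp add: compact_space_discrete_topology)
  ultimately have "compactin (powset_topology X) (g ` topspace ?P)"
    by (rule image_compactin[rotated])
  moreover have "g ` topspace ?P = Pow X"
  proof
    show "g ` topspace ?P \<subseteq> Pow X"
      by (auto simp: g_def)
    show "Pow X \<subseteq> g ` topspace ?P"
    proof
      fix A assume "A \<in> Pow X"
      then have "A = g (restrict (\<lambda>x. x \<in> A) X)"
        by (auto simp: g_def)
      moreover have "restrict (\<lambda>x. x \<in> A) X \<in> topspace ?P"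
        by simp
      ultimately show "A \<in> g ` topspace ?P"
        by (rule image_eqI)
    qed
  qed
  ultimately show ?thesis
    by (simp add: compact_space_def)
qed

section \<open>Partial bijections and their inverses\<close>

lemma pbij_SomeD: "f \<in> pbij X \<Longrightarrow> f x = Some y \<Longrightarrow> x \<in> X \<and> y \<in> X"
  unfolding pbij_def by (auto simp: dom_def ran_def)

lemma pbij_Some_inj:
  assumes "f \<in> pbij X" "f x = Some y" "f x' = Some y"
  shows "x = x'"
  using assms inj_onD[of f "dom f" x x'] by (auto simp: pbij_def)

definition pbij_inv :: "('a \<rightharpoonup> 'a) \<Rightarrow> ('a \<rightharpoonup> 'a)" where
  "pbij_inv f y = (if y \<in> ran f then Some (THE x. f x = Some y) else None)"

lemma pbij_inv_Some_iff:
  assumes f: "f \<in> pbij X"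
  shows "pbij_inv f y = Some x \<longleftrightarrow> f x = Some y"
proof -
  have the_preimage: "(THE x. f x = Some y) = x" if "f x = Some y" for x
    using that pbij_Some_inj[OF f] by (intro the_equality) auto
  show ?thesis
  proof
    assume "pbij_inv f y = Some x"
    then obtain x' where "f x' = Some y" "x = (THE x. f x = Some y)"
      by (auto simp: pbij_inv_def ran_def split: if_splits)
    then show "f x = Some y"
      using the_preimage by simp
  next
    assume "f x = Some y"
    then show "pbij_inv f y = Some x"
      using the_preimage by (auto simp: pbij_inv_def ran_def)
  qed
qed

lemma dom_pbij_inv: "f \<in> pbij X \<Longrightarrow> dom (pbij_inv f) = ran f"
  by (auto simp: dom_def ran_def pbij_inv_Some_iff)

lemma ran_pbij_inv: "f \<in> pbij X \<Longrightarrow> ran (pbij_inv f) = dom f"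
  by (auto simp: dom_def ran_def pbij_inv_Some_iff)

lemma pbij_inv_in_pbij:
  assumes f: "f \<in> pbij X"
  shows "pbij_inv f \<in> pbij X"
  unfolding pbij_def
proof (intro CollectI conjI)
  show "dom (pbij_inv f) \<subseteq> X" "ran (pbij_inv f) \<subseteq> X"
    using f dom_pbij_inv[OF f] ran_pbij_inv[OF f] by (auto simp: pbij_def)
  show "inj_on (pbij_inv f) (dom (pbij_inv f))"
  proof (rule inj_onI)
    fix y y' assume "y \<in> dom (pbij_inv f)" and eq: "pbij_inv f y = pbij_inv f y'"
    then obtain x where "pbij_inv f y = Some x"
      by blast
    with eq have "f x = Some y" "f x = Some y'"
      using pbij_inv_Some_iff[OF f] by metis+
    then show "y = y'"
      by simp
  qed
qed

lemma pbij_inv_pbij_inv: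
  assumes f: "f \<in> pbij X"
  shows "pbij_inv (pbij_inv f) = f"
proof
  fix x
  have "pbij_inv (pbij_inv f) x = Some y \<longleftrightarrow> f x = Some y" for y
    using pbij_inv_Some_iff[OF pbij_inv_in_pbij[OF f]] pbij_inv_Some_iff[OF f] by simp
  then show "pbij_inv (pbij_inv f) x = f x"
    by (cases "f x"; cases "pbij_inv (pbij_inv f) x") auto
qed

section \<open>The topology tau_pp\<close>

definition tau_pp_subbasis :: "'a set \<Rightarrow> ('a \<rightharpoonup> 'a) set set" where
  "tau_pp_subbasis X = insert (pbij X)
     ({vset X x y | x y. x \<in> X \<and> y \<in> X} \<union> {w1set X x | x. x \<in> X} \<union> {w2set X y | y. y \<in> X})"

lemma tau_pp_eq_topology_generated_by: "tau_pp X = topology_generated_by (tau_pp_subbasis X)"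
  unfolding tau_pp_def tau_pp_subbasis_def ..

lemma topspace_tau_pp [simp]: "topspace (tau_pp X) = pbij X"
  unfolding tau_pp_eq_topology_generated_by topology_generated_by_topspace
  by (auto simp: tau_pp_subbasis_def vset_def w1set_def w2set_def)

lemma openin_tau_pp_subbasis: "S \<in> tau_pp_subbasis X \<Longrightarrow> openin (tau_pp X) S"
  unfolding tau_pp_eq_topology_generated_by by (rule topology_generated_by_Basis)

lemma openin_vset: "x \<in> X \<Longrightarrow> y \<in> X \<Longrightarrow> openin (tau_pp X) (vset X x y)"
  by (rule openin_tau_pp_subbasis) (unfold tau_pp_subbasis_def, blast)

lemma openin_w1set: "x \<in> X \<Longrightarrow> openin (tau_pp X) (w1set X x)"
  by (rule openin_tau_pp_subbasis) (unfold tau_pp_subbasis_def, blast)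

lemma openin_w2set: "y \<in> X \<Longrightarrow> openin (tau_pp X) (w2set X y)"
  by (rule openin_tau_pp_subbasis) (unfold tau_pp_subbasis_def, blast)

lemma Dset_eq_Union_vset: "Dset X x = (\<Union>y\<in>X. vset X x y)"
  by (auto simp: Dset_def vset_def dest: pbij_SomeD)

lemma openin_Dset: "x \<in> X \<Longrightarrow> openin (tau_pp X) (Dset X x)"
  unfolding Dset_eq_Union_vset by (intro openin_Union) (auto intro: openin_vset)

lemma continuous_map_into_tau_pp_subbasis:
  assumes "\<phi> ` topspace Y \<subseteq> pbij X"
    and "\<And>x y. x \<in> X \<Longrightarrow> y \<in> X \<Longrightarrow> openin Y {t \<in> topspace Y. \<phi> t \<in> vset X x y}"
    and "\<And>x. x \<in> X \<Longrightarrow> openin Y {t \<in> topspace Y. \<phi> t \<in> w1set X x}"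
    and "\<And>y. y \<in> X \<Longrightarrow> openin Y {t \<in> topspace Y. \<phi> t \<in> w2set X y}"
  shows "continuous_map Y (tau_pp X) \<phi>"
  unfolding tau_pp_eq_topology_generated_by
proof (rule continuous_map_into_topology_generated_by)
  show "\<phi> ` topspace Y \<subseteq> \<Union> (tau_pp_subbasis X)"
    using assms(1) by (auto simp: tau_pp_subbasis_def)
  have "{t \<in> topspace Y. \<phi> t \<in> pbij X} = topspace Y"
    using assms(1) by auto
  then show "openin Y {t \<in> topspace Y. \<phi> t \<in> S}" if "S \<in> tau_pp_subbasis X" for S
    using that assms(2-4) by (auto simp: tau_pp_subbasis_def)
qed

lemma continuous_map_dom_tau_pp: "continuous_map (tau_pp X) (powset_topology X) dom"
  unfolding continuous_map_powset_topology_iff topspace_tau_pp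
proof (intro conjI ballI)
  show "dom ` pbij X \<subseteq> Pow X"
    by (auto simp: pbij_def)
  fix x assume x: "x \<in> X"
  have "{f \<in> pbij X. x \<in> dom f} = Dset X x"
    by (auto simp: Dset_def)
  with x show "openin (tau_pp X) {f \<in> pbij X. x \<in> dom f}"
    by (simp add: openin_Dset)
  have "{f \<in> pbij X. x \<notin> dom f} = w1set X x"
    by (auto simp: w1set_def)
  with x show "openin (tau_pp X) {f \<in> pbij X. x \<notin> dom f}"
    by (simp add: openin_w1set)
qed

lemma continuous_map_ev_tau_pp:
  assumes x: "x \<in> X"
  shows "continuous_map (subtopology (tau_pp X) (Dset X x)) (discrete_topology X) (ev x)"
proof -
  have topspace: "topspace (subtopology (tau_pp X) (Dset X x)) = Dset X x"
    by (auto simp: Dset_def)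
  show ?thesis
    unfolding continuous_map_discrete_topology_iff topspace
  proof (intro conjI ballI)
    show "ev x ` Dset X x \<subseteq> X"
      by (auto simp: Dset_def ev_def dest: pbij_SomeD)
    fix y assume y: "y \<in> X"
    have "{f \<in> Dset X x. ev x f = y} = Dset X x \<inter> vset X x y"
      by (auto simp: Dset_def vset_def ev_def)
    with x y show "openin (subtopology (tau_pp X) (Dset X x)) {f \<in> Dset X x. ev x f = y}"
      by (simp add: openin_vset openin_subtopology_Int2)
  qed
qed

lemma continuous_map_pbij_inv: "continuous_map (tau_pp X) (tau_pp X) pbij_inv"
proof (rule continuous_map_into_tau_pp_subbasis)
  show "pbij_inv ` topspace (tau_pp X) \<subseteq> pbij X"
    by (auto intro: pbij_inv_in_pbij)
  have "{f \<in> pbij X. pbij_inv f \<in> vset X x y} = vset X y x" for x y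
    by (auto simp: vset_def pbij_inv_Some_iff intro: pbij_inv_in_pbij)
  then show "openin (tau_pp X) {f \<in> topspace (tau_pp X). pbij_inv f \<in> vset X x y}"
    if "x \<in> X" "y \<in> X" for x y
    using that by (simp add: openin_vset)
  have "{f \<in> pbij X. pbij_inv f \<in> w1set X x} = w2set X x" for x
    using dom_pbij_inv pbij_inv_in_pbij unfolding w1set_def w2set_def by blast
  then show "openin (tau_pp X) {f \<in> topspace (tau_pp X). pbij_inv f \<in> w1set X x}"
    if "x \<in> X" for x
    using that by (simp add: openin_w2set)
  have "{f \<in> pbij X. pbij_inv f \<in> w2set X y} = w1set X y" for y
    using ran_pbij_inv pbij_inv_in_pbij unfolding w1set_def w2set_def by blast
  then show "openin (tau_pp X) {f \<in> topspace (tau_pp X). pbij_inv f \<in> w2set X y}"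
    if "y \<in> X" for y
    using that by (simp add: openin_w1set)
qed

lemma homeomorphic_map_pbij_inv: "homeomorphic_map (tau_pp X) (tau_pp X) pbij_inv"
  by (rule homeomorphic_map_involution[OF continuous_map_pbij_inv]) (simp add: pbij_inv_pbij_inv)

lemma continuous_map_ran_tau_pp: "continuous_map (tau_pp X) (powset_topology X) ran"
  by (rule continuous_map_eq[OF continuous_map_compose[OF continuous_map_pbij_inv continuous_map_dom_tau_pp]])
    (simp add: dom_pbij_inv)

lemma continuous_map_into_tau_pp:
  assumes into: "\<phi> ` topspace Y \<subseteq> pbij X"
    and dom: "continuous_map Y (powset_topology X) (dom \<circ> \<phi>)"
    and ran: "continuous_map Y (powset_topology X) (ran \<circ> \<phi>)"
    and ev: "\<forall>x\<in>X. continuous_map (subtopology Y {t \<in> topspace Y. \<phi> t \<in> Dset X x})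
                     (discrete_topology X) (ev x \<circ> \<phi>)"
  shows "continuous_map Y (tau_pp X) \<phi>"
proof (rule continuous_map_into_tau_pp_subbasis[OF into])
  fix x y assume x: "x \<in> X" and y: "y \<in> X"
  let ?D = "{t \<in> topspace Y. \<phi> t \<in> Dset X x}"
  have "?D = {t \<in> topspace Y. x \<in> (dom \<circ> \<phi>) t}"
    using into by (auto simp: Dset_def)
  then have D: "openin Y ?D"
    using dom x unfolding continuous_map_powset_topology_iff by simp
  have "openin (subtopology Y ?D) {t \<in> topspace (subtopology Y ?D). (ev x \<circ> \<phi>) t = y}"
    using ev x y unfolding continuous_map_discrete_topology_iff by blast
  moreover have "{t \<in> topspace (subtopology Y ?D). (ev x \<circ> \<phi>) t = y} =
                 {t \<in> topspace Y. \<phi> t \<in> vset X x y}"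
    by (auto simp: Dset_def vset_def ev_def)
  ultimately have "openin (subtopology Y ?D) {t \<in> topspace Y. \<phi> t \<in> vset X x y}"
    by (simp only:)
  then show "openin Y {t \<in> topspace Y. \<phi> t \<in> vset X x y}"
    using D by (rule openin_trans_full)
next
  fix x assume "x \<in> X"
  moreover have "{t \<in> topspace Y. \<phi> t \<in> w1set X x} = {t \<in> topspace Y. x \<notin> (dom \<circ> \<phi>) t}"
    using into by (auto simp: w1set_def)
  ultimately show "openin Y {t \<in> topspace Y. \<phi> t \<in> w1set X x}"
    using dom unfolding continuous_map_powset_topology_iff by simp
next
  fix y assume "y \<in> X"
  moreover have "{t \<in> topspace Y. \<phi> t \<in> w2set X y} = {t \<in> topspace Y. y \<notin> (ran \<circ> \<phi>) t}"
    using into by (auto simp: w2set_def)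
  ultimately show "openin Y {t \<in> topspace Y. \<phi> t \<in> w2set X y}"
    using ran unfolding continuous_map_powset_topology_iff by simp
qed

lemma continuous_map_into_tau_pp_iff:
  assumes "\<phi> ` topspace Y \<subseteq> pbij X"
  shows "continuous_map Y (tau_pp X) \<phi> \<longleftrightarrow>
          continuous_map Y (powset_topology X) (dom \<circ> \<phi>) \<and>
          continuous_map Y (powset_topology X) (ran \<circ> \<phi>) \<and>
          (\<forall>x\<in>X. continuous_map (subtopology Y {t \<in> topspace Y. \<phi> t \<in> Dset X x})
                     (discrete_topology X) (ev x \<circ> \<phi>))"
proof
  assume \<phi>: "continuous_map Y (tau_pp X) \<phi>"
  have "continuous_map (subtopology Y {t \<in> topspace Y. \<phi> t \<in> Dset X x})
                       (discrete_topology X) (ev x \<circ> \<phi>)" if "x \<in> X" for x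
  proof -
    have "continuous_map (subtopology Y {t \<in> topspace Y. \<phi> t \<in> Dset X x})
                         (subtopology (tau_pp X) (Dset X x)) \<phi>"
      by (rule continuous_map_into_subtopology[OF continuous_map_from_subtopology[OF \<phi>]]) auto
    then show ?thesis
      using continuous_map_ev_tau_pp[OF that] by (rule continuous_map_compose)
  qed
  then show "continuous_map Y (powset_topology X) (dom \<circ> \<phi>) \<and>
          continuous_map Y (powset_topology X) (ran \<circ> \<phi>) \<and>
          (\<forall>x\<in>X. continuous_map (subtopology Y {t \<in> topspace Y. \<phi> t \<in> Dset X x})
                     (discrete_topology X) (ev x \<circ> \<phi>))"
    using continuous_map_compose[OF \<phi> continuous_map_dom_tau_pp]
      continuous_map_compose[OF \<phi> continuous_map_ran_tau_pp] by blast
next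
  assume "continuous_map Y (powset_topology X) (dom \<circ> \<phi>) \<and>
          continuous_map Y (powset_topology X) (ran \<circ> \<phi>) \<and>
          (\<forall>x\<in>X. continuous_map (subtopology Y {t \<in> topspace Y. \<phi> t \<in> Dset X x})
                     (discrete_topology X) (ev x \<circ> \<phi>))"
  then show "continuous_map Y (tau_pp X) \<phi>"
    using continuous_map_into_tau_pp[OF assms] by blast
qed

lemma tau_pp_coarsest:
  assumes T: "topspace T = pbij X"
    and "continuous_map T (powset_topology X) dom" "continuous_map T (powset_topology X) ran"
    and "\<forall>x\<in>X. continuous_map (subtopology T (Dset X x)) (discrete_topology X) (ev x)"
    and U: "openin (tau_pp X) U"
  shows "openin T U"
proof -
  have "{f \<in> topspace T. id f \<in> Dset X x} = Dset X x" for x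
    using T by (auto simp: Dset_def)
  then have "continuous_map T (tau_pp X) id"
    using assms by (intro continuous_map_into_tau_pp) auto
  then show ?thesis
    using T U topology_finer_continuous_id[of "tau_pp X" T] by simp
qed

lemma compactin_tau_pp_idmap: "compactin (tau_pp X) {idmap A | A. A \<subseteq> X}"
proof -
  have dom: "dom (idmap A) = A" and ran: "ran (idmap A) = A" for A
    by (auto simp: idmap_def dom_def ran_def)
  have into: "idmap ` topspace (powset_topology X) \<subseteq> pbij X"
    by (auto simp: pbij_def idmap_def inj_on_def ran_def split: if_splits)
  have "continuous_map (powset_topology X) (tau_pp X) idmap"
  proof (rule continuous_map_into_tau_pp[OF into])
    show "continuous_map (powset_topology X) (powset_topology X) (dom \<circ> idmap)"
      by (rule continuous_map_eq[OF continuous_map_id]) (simp add: dom)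
    show "continuous_map (powset_topology X) (powset_topology X) (ran \<circ> idmap)"
      by (rule continuous_map_eq[OF continuous_map_id]) (simp add: ran)
    show "\<forall>x\<in>X. continuous_map
            (subtopology (powset_topology X) {A \<in> topspace (powset_topology X). idmap A \<in> Dset X x})
            (discrete_topology X) (ev x \<circ> idmap)"
    proof
      fix x assume "x \<in> X"
      then have "continuous_map
            (subtopology (powset_topology X) {A \<in> topspace (powset_topology X). idmap A \<in> Dset X x})
            (discrete_topology X) (\<lambda>_. x)"
        by simp
      then show "continuous_map
            (subtopology (powset_topology X) {A \<in> topspace (powset_topology X). idmap A \<in> Dset X x})
            (discrete_topology X) (ev x \<circ> idmap)"
        by (rule continuous_map_eq) (auto simp: Dset_def dom ev_def idmap_def)
    qed
  qed
  moreover have "idmap ` topspace (powset_topology X) = {idmap A | A. A \<subseteq> X}"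
    by auto
  ultimately show ?thesis
    by (metis compact_space_def compact_space_powset_topology image_compactin)
qed

section \<open>Openness of dom and im\<close>

text \<open>For finite V, F and G these are the finite intersections of subbasic sets of tau_pp.\<close>

definition pbij_cyl :: "'a set \<Rightarrow> ('a \<times> 'a) set \<Rightarrow> 'a set \<Rightarrow> 'a set \<Rightarrow> ('a \<rightharpoonup> 'a) set" where
  "pbij_cyl X V F G = {f \<in> pbij X. (\<forall>(x, y)\<in>V. f x = Some y) \<and> F \<inter> dom f = {} \<and> G \<inter> ran f = {}}"

definition pbij_basic :: "'a set \<Rightarrow> ('a \<rightharpoonup> 'a) set \<Rightarrow> bool" where
  "pbij_basic X B \<longleftrightarrow> (\<exists>V F G. finite V \<and> finite F \<and> finite G \<and> B = pbij_cyl X V F G)"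

lemma pbij_cyl_Int:
  "pbij_cyl X V F G \<inter> pbij_cyl X V' F' G' = pbij_cyl X (V \<union> V') (F \<union> F') (G \<union> G')"
  by (rule set_eqI) (simp add: pbij_cyl_def ball_Un Int_Un_distrib2 conj_ac)

lemma pbij_basic_Int: "pbij_basic X B \<Longrightarrow> pbij_basic X B' \<Longrightarrow> pbij_basic X (B \<inter> B')"
  unfolding pbij_basic_def by (metis finite_UnI pbij_cyl_Int)

lemma pbij_basic_cyl: "finite V \<Longrightarrow> finite F \<Longrightarrow> finite G \<Longrightarrow> pbij_basic X (pbij_cyl X V F G)"
  unfolding pbij_basic_def by blast

lemma pbij_basic_subbasis:
  assumes "S \<in> tau_pp_subbasis X"
  shows "pbij_basic X S"
proof -
  consider "S = pbij X" | x y where "S = vset X x y" | x where "S = w1set X x"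
    | y where "S = w2set X y"
    using assms unfolding tau_pp_subbasis_def by blast
  then show ?thesis
  proof cases
    case 1
    then have "S = pbij_cyl X {} {} {}"
      by (simp add: pbij_cyl_def)
    then show ?thesis
      by (simp add: pbij_basic_cyl)
  next
    case (2 x y)
    then have "S = pbij_cyl X {(x, y)} {} {}"
      by (auto simp: pbij_cyl_def vset_def)
    then show ?thesis
      by (simp add: pbij_basic_cyl)
  next
    case (3 x)
    then have "S = pbij_cyl X {} {x} {}"
      by (auto simp: pbij_cyl_def w1set_def)
    then show ?thesis
      by (simp add: pbij_basic_cyl)
  next
    case (4 y)
    then have "S = pbij_cyl X {} {} {y}"
      by (auto simp: pbij_cyl_def w2set_def)
    then show ?thesis
      by (simp add: pbij_basic_cyl)
  qed
qed

lemma openin_tau_pp_basic_nbhd: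
  assumes "openin (tau_pp X) U" "f \<in> U"
  shows "\<exists>B. pbij_basic X B \<and> f \<in> B \<and> B \<subseteq> U"
proof -
  have "generate_topology_on (tau_pp_subbasis X) U"
    using assms(1) unfolding tau_pp_eq_topology_generated_by by (rule openin_topology_generated_by)
  then have "\<forall>f\<in>U. \<exists>B. pbij_basic X B \<and> f \<in> B \<and> B \<subseteq> U"
  proof induction
    case Empty
    show ?case
      by simp
  next
    case (Int a b)
    show ?case
    proof
      fix f assume f: "f \<in> a \<inter> b"
      obtain B where "pbij_basic X B" "f \<in> B" "B \<subseteq> a"
        using Int.IH(1) f by blast
      moreover obtain B' where "pbij_basic X B'" "f \<in> B'" "B' \<subseteq> b"
        using Int.IH(2) f by blast
      ultimately show "\<exists>B. pbij_basic X B \<and> f \<in> B \<and> B \<subseteq> a \<inter> b"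
        by (blast intro: pbij_basic_Int)
    qed
  next
    case (UN K)
    show ?case
    proof
      fix f assume "f \<in> \<Union>K"
      then obtain k where "k \<in> K" "f \<in> k"
        by blast
      with UN.IH obtain B where "pbij_basic X B" "f \<in> B" "B \<subseteq> k"
        by blast
      with \<open>k \<in> K\<close> show "\<exists>B. pbij_basic X B \<and> f \<in> B \<and> B \<subseteq> \<Union>K"
        by blast
    qed
  next
    case (Basis S)
    have "pbij_basic X S"
      using Basis.hyps by (rule pbij_basic_subbasis)
    then show ?case
      by blast
  qed
  with assms(2) show ?thesis
    by blast
qed

lemma infinite_Diff_finite_eqpoll:
  assumes "infinite X" "finite S"
  shows "X - S \<approx> X"
  using assms(2)
proof induction
  case empty
  show ?case by simp
next
  case (insert s S)
  show ?case
  proof (cases "s \<in> X - S")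
    case True
    then have "X - S = insert s (X - insert s S)"
      by blast
    moreover have "infinite (X - insert s S)"
      using assms(1) insert(1) by simp
    ultimately have "X - S \<approx> X - insert s S"
      by (metis infinite_insert_eqpoll)
    with insert.IH show ?thesis
      by (metis eqpoll_sym eqpoll_trans)
  next
    case False
    then have "X - insert s S = X - S"
      by blast
    with insert.IH show ?thesis
      by simp
  qed
qed

lemma pbij_glue:
  assumes g: "\<And>x. g x = (if x \<in> D then f x else if x \<in> A then Some (h x) else None)"
    and f: "f \<in> pbij X" "D \<subseteq> dom f" and A: "D \<subseteq> A" "A \<subseteq> X"
    and h: "inj_on h A" "h ` A \<subseteq> X" and disjoint: "ran (f |` D) \<inter> h ` A = {}"
  shows "g \<in> pbij X" "dom g = A" "ran g \<subseteq> ran f \<union> h ` A"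
proof -
  have g_D: "f x = Some y" "y \<notin> h ` A" if "x \<in> D" "g x = Some y" for x y
  proof -
    show "f x = Some y"
      using that by (simp add: g)
    then have "y \<in> ran (f |` D)"
      using that(1) by (auto simp: ran_def restrict_map_def)
    with disjoint show "y \<notin> h ` A"
      by blast
  qed
  have g_A: "x \<in> A" "y = h x" if "x \<notin> D" "g x = Some y" for x y
    using that by (auto simp: g split: if_splits)
  have "g x \<noteq> None \<longleftrightarrow> x \<in> A" for x
    using f(2) A(1) by (cases "x \<in> D") (auto simp: g)
  then show dom_g: "dom g = A"
    by (auto simp: dom_def)
  show ran_g: "ran g \<subseteq> ran f \<union> h ` A"
  proof
    fix y assume "y \<in> ran g"
    then obtain x where gx: "g x = Some y"
      by (auto simp: ran_def)
    show "y \<in> ran f \<union> h ` A"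
    proof (cases "x \<in> D")
      case True
      then show ?thesis
        using g_D(1) gx by (blast intro: ranI)
    next
      case False
      then show ?thesis
        using g_A gx by blast
    qed
  qed
  have "inj_on g (dom g)"
  proof (rule inj_onI)
    fix x x' assume "x \<in> dom g" and eq: "g x = g x'"
    then obtain y where gx: "g x = Some y"
      by blast
    with eq have gx': "g x' = Some y"
      by simp
    show "x = x'"
    proof (cases "x \<in> D"; cases "x' \<in> D")
      assume "x \<in> D" "x' \<in> D"
      then show ?thesis
        using g_D gx gx' pbij_Some_inj[OF f(1)] by metis
    next
      assume "x \<notin> D" "x' \<notin> D"
      then show ?thesis
        using g_A gx gx' h(1) by (metis inj_onD)
    next
      assume "x \<in> D" "x' \<notin> D"
      then show ?thesis
        using g_D(2) g_A gx gx' by blast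
    next
      assume "x \<notin> D" "x' \<in> D"
      then show ?thesis
        using g_D(2) g_A gx gx' by blast
    qed
  qed
  moreover have "ran g \<subseteq> X"
    using ran_g f(1) h(2) unfolding pbij_def by blast
  ultimately show "g \<in> pbij X"
    using dom_g A(2) by (simp add: pbij_def)
qed

lemma dom_pbij_cyl_extend:
  assumes "infinite X" "finite V" "finite G"
    and f: "f \<in> pbij_cyl X V F G"
    and A: "A \<subseteq> X" "A \<inter> (fst ` V \<union> F) = dom f \<inter> (fst ` V \<union> F)"
  shows "A \<in> dom ` pbij_cyl X V F G"
proof -
  let ?S = "snd ` V \<union> G"
  have "X - ?S \<approx> X"
    using assms(1-3) by (intro infinite_Diff_finite_eqpoll) auto
  then have "X \<lesssim> X - ?S"
    by (meson eqpoll_imp_lepoll eqpoll_sym)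
  then obtain h where h: "inj_on h X" "h ` X \<subseteq> X - ?S"
    unfolding lepoll_def by blast
  have fp: "f \<in> pbij X" and fV: "\<And>x y. (x, y) \<in> V \<Longrightarrow> f x = Some y"
    and fF: "F \<inter> dom f = {}" and fG: "G \<inter> ran f = {}"
    using f by (auto simp: pbij_cyl_def)
  have D: "fst ` V \<subseteq> dom f"
    using fV by force
  with A(2) have DA: "fst ` V \<subseteq> A"
    by blast
  have hA: "inj_on h A" "h ` A \<subseteq> X"
    using h A(1) by (auto intro: inj_on_subset)
  have "ran (f |` (fst ` V)) \<subseteq> snd ` V"
  proof
    fix y assume "y \<in> ran (f |` (fst ` V))"
    then obtain x where "x \<in> fst ` V" "f x = Some y"
      by (auto simp: ran_def restrict_map_def split: if_splits)
    then obtain y' where "(x, y') \<in> V" "f x = Some y"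
      by force
    with fV show "y \<in> snd ` V"
      by force
  qed
  then have disjoint: "ran (f |` (fst ` V)) \<inter> h ` A = {}"
    using h(2) A(1) by blast
  define g where "g x = (if x \<in> fst ` V then f x else if x \<in> A then Some (h x) else None)"
    for x
  note g = pbij_glue[of g, OF g_def fp D DA A(1) hA disjoint]
  have "\<forall>(x, y)\<in>V. g x = Some y"
    using fV by (force simp: g_def)
  moreover have "F \<inter> dom g = {}"
    using A(2) fF g(2) by blast
  moreover have "G \<inter> ran g = {}"
    using fG g(3) h(2) A(1) by blast
  ultimately have "g \<in> pbij_cyl X V F G"
    using g(1) by (simp add: pbij_cyl_def)
  with g(2) show ?thesis
    by blast
qed

lemma dom_pbij_basic_nbhd:
  assumes "pbij_basic X B" "f \<in> B"
  obtains N where "openin (powset_topology X) N" "dom f \<in> N" "N \<subseteq> dom ` B"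
proof -
  obtain V F G where fin: "finite V" "finite F" "finite G" and B: "B = pbij_cyl X V F G"
    using assms(1) unfolding pbij_basic_def by blast
  with assms(2) have f: "f \<in> pbij_cyl X V F G"
    by simp
  then have domf: "dom f \<subseteq> X"
    by (simp add: pbij_cyl_def pbij_def)
  show ?thesis
  proof (cases "finite X")
    case True
    have "openin (powset_topology X) {A \<in> Pow X. A \<inter> X = dom f \<inter> X}"
      using True by (rule openin_powset_topology_cylinder) simp
    moreover have "{A \<in> Pow X. A \<inter> X = dom f \<inter> X} = {dom f}"
      using domf by auto
    ultimately have "openin (powset_topology X) {dom f}"
      by simp
    moreover have "{dom f} \<subseteq> dom ` B"
      using assms(2) by blast
    ultimately show ?thesis
      using that by blast
  next
    case False
    let ?K = "(fst ` V \<union> F) \<inter> X"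
    have "openin (powset_topology X) {A \<in> Pow X. A \<inter> ?K = dom f \<inter> ?K}"
      using fin by (intro openin_powset_topology_cylinder) auto
    moreover have "dom f \<in> {A \<in> Pow X. A \<inter> ?K = dom f \<inter> ?K}"
      using domf by simp
    moreover have "{A \<in> Pow X. A \<inter> ?K = dom f \<inter> ?K} \<subseteq> dom ` B"
    proof
      fix A assume "A \<in> {A \<in> Pow X. A \<inter> ?K = dom f \<inter> ?K}"
      then have "A \<subseteq> X" "A \<inter> (fst ` V \<union> F) = dom f \<inter> (fst ` V \<union> F)"
        using domf by auto
      then show "A \<in> dom ` B"
        unfolding B by (rule dom_pbij_cyl_extend[OF False fin(1,3) f])
    qed
    ultimately show ?thesis
      by (rule that)
  qed
qed

lemma open_map_dom_tau_pp: "open_map (tau_pp X) (powset_topology X) dom"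
  unfolding open_map_def
proof (intro allI impI)
  fix U assume U: "openin (tau_pp X) U"
  show "openin (powset_topology X) (dom ` U)"
    unfolding openin_subopen[of _ "dom ` U"]
  proof
    fix A assume "A \<in> dom ` U"
    then obtain f where f: "f \<in> U" "A = dom f"
      by blast
    obtain B where B: "pbij_basic X B" "f \<in> B" and "B \<subseteq> U"
      using openin_tau_pp_basic_nbhd[OF U f(1)] by blast
    obtain N where N: "openin (powset_topology X) N" "dom f \<in> N" and "N \<subseteq> dom ` B"
      using dom_pbij_basic_nbhd[OF B] by blast
    note \<open>N \<subseteq> dom ` B\<close>
    also from \<open>B \<subseteq> U\<close> have "dom ` B \<subseteq> dom ` U"
      by (rule image_mono)
    finally show "\<exists>N. openin (powset_topology X) N \<and> A \<in> N \<and> N \<subseteq> dom ` U"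
      using N f(2) by (intro exI[of _ N]) simp
  qed
qed

lemma open_map_ran_tau_pp: "open_map (tau_pp X) (powset_topology X) ran"
proof (rule open_map_eq)
  show "open_map (tau_pp X) (powset_topology X) (dom \<circ> pbij_inv)"
    by (rule open_map_compose[OF homeomorphic_imp_open_map[OF homeomorphic_map_pbij_inv]
          open_map_dom_tau_pp])
qed (simp add: dom_pbij_inv)

theorem theorem3p8:
  fixes X :: "'a set"
  shows
   "(\<comment> \<open>(i)\<close>
      (continuous_map (tau_pp X) (powset_topology X) dom \<and>
       continuous_map (tau_pp X) (powset_topology X) ran \<and>
       (\<forall>x\<in>X. continuous_map (subtopology (tau_pp X) (Dset X x)) (discrete_topology X) (ev x))) \<and>
      (\<forall>T :: ('a \<rightharpoonup> 'a) topology.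
         topspace T = pbij X \<and>
         continuous_map T (powset_topology X) dom \<and>
         continuous_map T (powset_topology X) ran \<and>
         (\<forall>x\<in>X. continuous_map (subtopology T (Dset X x)) (discrete_topology X) (ev x))
         \<longrightarrow> (\<forall>U. openin (tau_pp X) U \<longrightarrow> openin T U))) \<and>
    \<comment> \<open>(ii)\<close>
    open_map (tau_pp X) (powset_topology X) dom \<and>
    open_map (tau_pp X) (powset_topology X) ran \<and>
    \<comment> \<open>(iii)\<close>
    (\<forall>(Y :: 'b topology) (\<phi> :: 'b \<Rightarrow> ('a \<rightharpoonup> 'a)).
       \<phi> ` topspace Y \<subseteq> pbij X \<longrightarrow>
       (continuous_map Y (tau_pp X) \<phi> \<longleftrightarrow>
          continuous_map Y (powset_topology X) (dom \<circ> \<phi>) \<and>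
          continuous_map Y (powset_topology X) (ran \<circ> \<phi>) \<and>
          (\<forall>x\<in>X. continuous_map (subtopology Y {y \<in> topspace Y. \<phi> y \<in> Dset X x})
                     (discrete_topology X) (ev x \<circ> \<phi>)))) \<and>
    \<comment> \<open>(iv)\<close>
    compactin (tau_pp X) {idmap A | A. A \<subseteq> X}"
  by (intro conjI allI impI ballI continuous_map_dom_tau_pp continuous_map_ran_tau_pp
      continuous_map_ev_tau_pp open_map_dom_tau_pp open_map_ran_tau_pp
      continuous_map_into_tau_pp_iff compactin_tau_pp_idmap)
    (auto intro: tau_pp_coarsest)

end
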